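(* Let $K$ be an algebraically closed field, $R=K[x_1,\dots,x_6]$ and $I=(x_1x_3,\ x_1x_4,\ x_2x_4,\ x_3x_5,\ x_3x_6,\ x_4x_6,\ x_1x_2x_5,\ x_1x_2x_6,\ x_1x_5x_6,\ x_2x_5x_6)$. Then $$I=\sqrt{(x_1x_4,\ x_3x_6,\ x_1x_3+x_2x_4+x_1x_2x_5,\ x_3x_5+x_4x_6+x_1x_2x_6+x_1x_5x_6+x_2x_5x_6)}.$$ *)

theory Defs
  imports "HOL-Computational_Algebra.Polynomial"
begin

text \<open>The polynomial ring K[x1,...,x6] is represented as the iterated univariate
  polynomial ring K[x1][x2][x3][x4][x5][x6] (nested type poly).\<close>

type_synonym 'a mpoly6 = "'a poly poly poly poly poly poly"

definition X1 :: "'a::comm_ring_1 mpoly6" where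
  "X1 = [:[:[:[:[:monom 1 1:]:]:]:]:]"
definition X2 :: "'a::comm_ring_1 mpoly6" where
  "X2 = [:[:[:[:monom 1 1:]:]:]:]"
definition X3 :: "'a::comm_ring_1 mpoly6" where
  "X3 = [:[:[:monom 1 1:]:]:]"
definition X4 :: "'a::comm_ring_1 mpoly6" where
  "X4 = [:[:monom 1 1:]:]"
definition X5 :: "'a::comm_ring_1 mpoly6" where
  "X5 = [:monom 1 1:]"
definition X6 :: "'a::comm_ring_1 mpoly6" where
  "X6 = monom 1 1"

definition ideal_gen :: "'b::comm_ring_1 set \<Rightarrow> 'b set" where
  "ideal_gen G = module.span ((*)) G"

definition radical :: "'b::comm_ring_1 set \<Rightarrow> 'b set" where
  "radical J = {f. \<exists>n. f ^ n \<in> J}"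

end

theory Submission
  imports Defs
begin

(* I is a squarefree monomial ideal, hence radical: a polynomial h lies in the ideal
   generated by the monomials x_G (G in a family Gs) as soon as h vanishes under every
   substitution x_i := 0 (i in S) with S a vertex cover of Gs. This is proved by splitting
   h = h|_{x_i = 0} + x_i q one variable at a time. Since J is contained in I, rad J is
   contained in rad I = I. Conversely, every generator of I lies in rad J, by repeated use
   of the fact that a + b and a b in rad J force a, b in rad J. *)

lemma module_mult: "module ((*) :: 'a::comm_ring_1 \<Rightarrow> 'a \<Rightarrow> 'a)"
  by standard (simp_all add: algebra_simps)

lemma ideal_gen_base: "g \<in> G \<Longrightarrow> g \<in> ideal_gen G"
  unfolding ideal_gen_def by (rule module.span_base[OF module_mult])

lemma ideal_gen_zero: "0 \<in> ideal_gen G"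
  unfolding ideal_gen_def by (rule module.span_zero[OF module_mult])

lemma ideal_gen_add: "a \<in> ideal_gen G \<Longrightarrow> b \<in> ideal_gen G \<Longrightarrow> a + b \<in> ideal_gen G"
  unfolding ideal_gen_def by (rule module.span_add[OF module_mult])

lemma ideal_gen_mult: "a \<in> ideal_gen G \<Longrightarrow> c * a \<in> ideal_gen G"
  unfolding ideal_gen_def by (rule module.span_scale[OF module_mult])

lemma ideal_gen_sum: "(\<And>x. x \<in> A \<Longrightarrow> f x \<in> ideal_gen G) \<Longrightarrow> sum f A \<in> ideal_gen G"
  unfolding ideal_gen_def by (rule module.span_sum[OF module_mult])

lemma ideal_gen_subset:
  assumes "G \<subseteq> J" "0 \<in> J" "\<And>a b. a \<in> J \<Longrightarrow> b \<in> J \<Longrightarrow> a + b \<in> J"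
    "\<And>c a. a \<in> J \<Longrightarrow> c * a \<in> J"
  shows "ideal_gen G \<subseteq> J"
  unfolding ideal_gen_def using assms
  by (intro module.span_minimal[OF module_mult]) (auto simp: module.subspace_def[OF module_mult])

lemma ideal_gen_least: "G \<subseteq> ideal_gen H \<Longrightarrow> ideal_gen G \<subseteq> ideal_gen H"
  unfolding ideal_gen_def
  using module.span_minimal[OF module_mult] module.subspace_span[OF module_mult] by blast

lemma ideal_gen_mono: "G \<subseteq> H \<Longrightarrow> ideal_gen G \<subseteq> ideal_gen H"
  unfolding ideal_gen_def by (rule module.span_mono[OF module_mult])

lemma radical_mono: "J \<subseteq> J' \<Longrightarrow> radical J \<subseteq> radical J'"
  unfolding radical_def by blast

lemma ideal_gen_subset_radical: "ideal_gen G \<subseteq> radical (ideal_gen G)"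
  unfolding radical_def by (auto intro: exI[of _ 1])

lemma radical_mult:
  assumes "a \<in> radical (ideal_gen G)"
  shows "c * a \<in> radical (ideal_gen G)"
proof -
  obtain n where "a ^ n \<in> ideal_gen G" using assms unfolding radical_def by blast
  then have "(c * a) ^ n \<in> ideal_gen G" by (simp add: power_mult_distrib ideal_gen_mult)
  then show ?thesis unfolding radical_def by blast
qed

lemma power_add_in_ideal_gen:
  fixes a b :: "'a::comm_ring_1"
  assumes "a ^ m \<in> ideal_gen G" "b ^ n \<in> ideal_gen G"
  shows "(a + b) ^ (m + n) \<in> ideal_gen G"
proof -
  have "of_nat (m + n choose k) * a ^ k * b ^ (m + n - k) \<in> ideal_gen G" for k
  proof (cases "m \<le> k")
    case True
    then have "a ^ k = a ^ (k - m) * a ^ m" by (simp flip: power_add)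
    then have "of_nat (m + n choose k) * a ^ k * b ^ (m + n - k)
        = (of_nat (m + n choose k) * a ^ (k - m) * b ^ (m + n - k)) * a ^ m"
      by (simp only: mult_ac)
    then show ?thesis using ideal_gen_mult[OF assms(1)] by metis
  next
    case False
    then have "b ^ (m + n - k) = b ^ (m - k) * b ^ n" by (simp flip: power_add)
    then have "of_nat (m + n choose k) * a ^ k * b ^ (m + n - k)
        = (of_nat (m + n choose k) * a ^ k * b ^ (m - k)) * b ^ n"
      by (simp only: mult_ac)
    then show ?thesis using ideal_gen_mult[OF assms(2)] by metis
  qed
  then show ?thesis
    unfolding binomial_ring by (rule ideal_gen_sum)
qed

lemma radical_add:
  assumes "a \<in> radical (ideal_gen G)" "b \<in> radical (ideal_gen G)"
  shows "a + b \<in> radical (ideal_gen G)"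
  using assms power_add_in_ideal_gen unfolding radical_def by blast

lemma ideal_gen_subset_radicalI:
  "G \<subseteq> radical (ideal_gen H) \<Longrightarrow> ideal_gen G \<subseteq> radical (ideal_gen H)"
  by (rule ideal_gen_subset)
    (use ideal_gen_subset_radical ideal_gen_zero
      in \<open>auto intro: radical_add radical_mult\<close>)

lemma radical_summands:
  assumes "a + b \<in> radical (ideal_gen G)" "a * b \<in> radical (ideal_gen G)"
  shows "a \<in> radical (ideal_gen G)" "b \<in> radical (ideal_gen G)"
proof -
  have square: "x \<in> radical (ideal_gen G)"
    if sum: "x * (x + y) \<in> radical (ideal_gen G)" and prod: "x * y \<in> radical (ideal_gen G)"
    for x y
  proof -
    have "x * (x + y) + (- 1) * (x * y) \<in> radical (ideal_gen G)"
      by (rule radical_add[OF sum radical_mult[OF prod]])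
    then obtain n where "(x ^ 2) ^ n \<in> ideal_gen G"
      unfolding radical_def by (auto simp: algebra_simps power2_eq_square)
    then show ?thesis unfolding radical_def by (auto simp flip: power_mult)
  qed
  show "a \<in> radical (ideal_gen G)"
    using square[of a b] assms radical_mult by blast
  have "b * (b + a) \<in> radical (ideal_gen G)"
    using radical_mult[OF assms(1), of b] by (simp add: add.commute)
  moreover have "b * a \<in> radical (ideal_gen G)"
    using assms(2) by (simp add: mult.commute)
  ultimately show "b \<in> radical (ideal_gen G)"
    by (rule square)
qed

locale comm_ring_hom =
  fixes hom :: "'a::comm_ring_1 \<Rightarrow> 'b::comm_ring_1"
  assumes hom_add: "hom (x + y) = hom x + hom y"
    and hom_mult: "hom (x * y) = hom x * hom y"
    and hom_one: "hom 1 = 1"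
begin

lemma hom_zero: "hom 0 = 0"
  using hom_add[of 0 0] by simp

lemma hom_uminus: "hom (- x) = - hom x"
  using hom_add[of "- x" x] by (simp add: hom_zero eq_neg_iff_add_eq_0)

lemma hom_diff: "hom (x - y) = hom x - hom y"
  by (simp only: diff_conv_add_uminus hom_add hom_uminus)

lemma hom_power: "hom (x ^ n) = hom x ^ n"
  by (induction n) (simp_all add: hom_one hom_mult)

lemma hom_prod: "hom (prod f A) = (\<Prod>a\<in>A. hom (f a))"
  by (induction A rule: infinite_finite_induct) (simp_all add: hom_one hom_mult)

lemma hom_ideal_gen_eq_0:
  assumes "\<And>g. g \<in> G \<Longrightarrow> hom g = 0" "a \<in> ideal_gen G"
  shows "hom a = 0"
proof -
  have "ideal_gen G \<subseteq> {a. hom a = 0}"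
    by (rule ideal_gen_subset) (auto simp: assms(1) hom_zero hom_add hom_mult)
  then show ?thesis using assms(2) by blast
qed

end

lemma comm_ring_hom_map_poly:
  assumes "comm_ring_hom f"
  shows "comm_ring_hom (map_poly f)"
proof -
  interpret comm_ring_hom f by (fact assms)
  have add: "map_poly f (p + q) = map_poly f p + map_poly f q" for p q
    by (intro poly_eqI) (simp add: coeff_map_poly hom_zero hom_add)
  have "map_poly f (p * q) = map_poly f p * map_poly f q" for p q
  proof (induction p)
    case (pCons a p)
    have "map_poly f (pCons a p * q) = map_poly f (smult a q + pCons 0 (p * q))"
      by simp
    also have "\<dots> = smult (f a) (map_poly f q) + pCons 0 (map_poly f p * map_poly f q)"
      using pCons.IH by (simp add: add map_poly_smult map_poly_pCons hom_zero hom_mult)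
    also have "\<dots> = map_poly f (pCons a p) * map_poly f q"
      by (simp add: map_poly_pCons hom_zero)
    finally show ?case .
  qed simp
  then show ?thesis
    by unfold_locales (simp_all add: add hom_one)
qed

lemma comm_ring_hom_const_coeff:
  assumes "comm_ring_hom f"
  shows "comm_ring_hom (\<lambda>p. [:f (coeff p 0):])"
proof -
  interpret comm_ring_hom f by (fact assms)
  show ?thesis
    by unfold_locales (simp_all add: coeff_mult_0 hom_add hom_mult hom_one)
qed

lemma sum_card_image_Diff_less:
  assumes "finite P" "S0 \<in> P" "i \<in> S0" "finite S0"
  shows "(\<Sum>S\<in>(\<lambda>S. S - {i}) ` P. card S + 1) < (\<Sum>S\<in>P. card S + 1)"
proof -
  have "(\<Sum>S\<in>(\<lambda>S. S - {i}) ` P. card S + 1) \<le> (\<Sum>S\<in>P. card (S - {i}) + 1)"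
    using sum_image_le[OF assms(1), of "\<lambda>S. card S + 1" "\<lambda>S. S - {i}"] by (simp add: o_def)
  also have "\<dots> < (\<Sum>S\<in>P. card S + 1)"
    using assms by (intro sum_strict_mono_ex1) (auto intro!: card_Diff1_le bexI[of _ S0] card_Diff1_less)
  finally show ?thesis .
qed

lemma sum_card_filter_less:
  assumes "finite P" "S0 \<in> P" "i \<in> S0"
  shows "(\<Sum>S\<in>{S \<in> P. i \<notin> S}. card S + 1) < (\<Sum>S\<in>P. card S + 1)"
  using assms by (intro sum_strict_mono2[where b = S0]) auto

locale zero_substitution =
  fixes vars :: "'i set" and var :: "'i \<Rightarrow> 'a::idom"
    and subst0 :: "'i set \<Rightarrow> 'a \<Rightarrow> 'a"
  assumes finite_vars: "finite vars"
    and comm_ring_hom_subst0: "comm_ring_hom (subst0 S)"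
    and subst0_empty: "subst0 {} a = a"
    and subst0_subst0: "subst0 S (subst0 T a) = subst0 (S \<union> T) a"
    and subst0_var: "i \<in> vars \<Longrightarrow> subst0 S (var i) = (if i \<in> S then 0 else var i)"
    and var_dvd_diff_subst0: "i \<in> vars \<Longrightarrow> var i dvd a - subst0 {i} a"
    and var_nonzero: "i \<in> vars \<Longrightarrow> var i \<noteq> 0"

sublocale zero_substitution \<subseteq> subst0: comm_ring_hom "subst0 S" for S
  by (fact comm_ring_hom_subst0)

context zero_substitution
begin

definition transversal_ideal :: "'i set set \<Rightarrow> 'a set" where
  "transversal_ideal P = ideal_gen {prod var T | T. T \<subseteq> vars \<and> (\<forall>S\<in>P. T \<inter> S \<noteq> {})}"

lemma transversal_ideal_mono:
  assumes "\<And>S. S \<in> P \<Longrightarrow> \<exists>S'\<in>Q. S' \<subseteq> S"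
  shows "transversal_ideal Q \<subseteq> transversal_ideal P"
  unfolding transversal_ideal_def
proof (intro ideal_gen_mono subsetI)
  fix a assume "a \<in> {prod var T |T. T \<subseteq> vars \<and> (\<forall>S\<in>Q. T \<inter> S \<noteq> {})}"
  then obtain T where T: "a = prod var T" "T \<subseteq> vars" "\<forall>S\<in>Q. T \<inter> S \<noteq> {}"
    by blast
  have "T \<inter> S \<noteq> {}" if S: "S \<in> P" for S
  proof -
    obtain S' where "S' \<in> Q" "S' \<subseteq> S" using assms[OF S] by blast
    with T(3) show ?thesis by blast
  qed
  with T(1,2) show "a \<in> {prod var T |T. T \<subseteq> vars \<and> (\<forall>S\<in>P. T \<inter> S \<noteq> {})}"
    by blast
qed

lemma one_in_transversal_ideal_empty: "1 \<in> transversal_ideal {}"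
  unfolding transversal_ideal_def by (rule ideal_gen_base) (auto intro: exI[of _ "{}"])

lemma var_mult_transversal_ideal:
  assumes "i \<in> vars" "a \<in> transversal_ideal {S \<in> P. i \<notin> S}"
  shows "var i * a \<in> transversal_ideal P"
proof -
  have generators: "var i * prod var T \<in> transversal_ideal P"
    if "T \<subseteq> vars" "\<forall>S\<in>{S \<in> P. i \<notin> S}. T \<inter> S \<noteq> {}" for T
  proof -
    have "prod var (insert i T) \<in> transversal_ideal P"
      unfolding transversal_ideal_def using that assms(1) by (intro ideal_gen_base) blast
    moreover have "var i * prod var T = (if i \<in> T then var i else 1) * prod var (insert i T)"
      using finite_subset[OF that(1) finite_vars] by (simp add: insert_absorb)
    ultimately show ?thesis
      unfolding transversal_ideal_def by (simp add: ideal_gen_mult)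
  qed
  have "transversal_ideal {S \<in> P. i \<notin> S} \<subseteq> {a. var i * a \<in> transversal_ideal P}"
    unfolding transversal_ideal_def[of "{S \<in> P. i \<notin> S}"]
  proof (rule ideal_gen_subset)
    show "0 \<in> {a. var i * a \<in> transversal_ideal P}"
      by (simp add: transversal_ideal_def ideal_gen_zero)
    show "a + b \<in> {a. var i * a \<in> transversal_ideal P}"
      if "a \<in> {a. var i * a \<in> transversal_ideal P}" "b \<in> {a. var i * a \<in> transversal_ideal P}"
      for a b
      using that ideal_gen_add by (auto simp: transversal_ideal_def distrib_left)
    show "c * a \<in> {a. var i * a \<in> transversal_ideal P}"
      if "a \<in> {a. var i * a \<in> transversal_ideal P}" for a c
    proof -
      have "c * (var i * a) \<in> transversal_ideal P"
        using that by (simp add: transversal_ideal_def ideal_gen_mult)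
      then show ?thesis by (simp add: mult.left_commute)
    qed
  qed (use generators in auto)
  then show ?thesis using assms(2) by blast
qed

lemma subst0_Diff_subst0_eq_0:
  assumes "subst0 S h = 0"
  shows "subst0 (S - {i}) (subst0 {i} h) = 0"
proof -
  have "subst0 (S - {i}) (subst0 {i} h) = subst0 {i} (subst0 S h)"
    by (simp add: subst0_subst0 Un_commute)
  then show ?thesis by (simp add: assms subst0.hom_zero)
qed

lemma subst0_quotient_eq_0:
  assumes "i \<in> vars" "i \<notin> S" "subst0 S h = 0" "h = subst0 {i} h + var i * q"
  shows "subst0 S q = 0"
proof -
  have "var i * subst0 S q = subst0 S (var i * q)"
    using assms(1,2) by (simp add: subst0.hom_mult subst0_var)
  also have "\<dots> = subst0 S h - subst0 {i} (subst0 S h)"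
    using assms(4) by (metis add_diff_cancel_left' subst0.hom_diff subst0_subst0 Un_commute)
  also have "\<dots> = 0"
    using assms(3) by (simp add: subst0.hom_zero)
  finally show ?thesis using var_nonzero[OF assms(1)] by simp
qed

lemma subst0_decomposition:
  assumes "i \<in> vars"
  obtains q where "h = subst0 {i} h + var i * q"
proof -
  obtain q where "h - subst0 {i} h = var i * q"
    using var_dvd_diff_subst0[OF assms] by (auto elim: dvdE)
  then show ?thesis
    by (intro that[of q]) (metis add.commute diff_add_cancel)
qed

lemma vanishing_imp_transversal_ideal:
  assumes "P \<subseteq> Pow vars" "\<And>S. S \<in> P \<Longrightarrow> subst0 S h = 0"
  shows "h \<in> transversal_ideal P"
  using assms
proof (induction "\<Sum>S\<in>P. card S + 1" arbitrary: P h rule: less_induct)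
  case less
  have finite_P: "finite P"
    using less.prems(1) finite_vars by (meson finite_Pow_iff finite_subset)
  consider "{} \<in> P" | "P = {}" | S0 i where "S0 \<in> P" "i \<in> S0"
    by (metis all_not_in_conv)
  then show ?case
  proof cases
    case 1
    then have "h = 0" using less.prems(2)[of "{}"] by (simp add: subst0_empty)
    then show ?thesis by (simp add: transversal_ideal_def ideal_gen_zero)
  next
    case 2
    show ?thesis
      using ideal_gen_mult[OF one_in_transversal_ideal_empty[unfolded transversal_ideal_def], of h] 2
      by (simp add: transversal_ideal_def)
  next
    case (3 S0 i)
    have i: "i \<in> vars" and finite_S0: "finite S0"
      using 3 less.prems(1) finite_vars by (auto intro: finite_subset)
    obtain q where q: "h = subst0 {i} h + var i * q"
      using subst0_decomposition[OF i] .
    have "subst0 {i} h \<in> transversal_ideal ((\<lambda>S. S - {i}) ` P)"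
      using less.prems sum_card_image_Diff_less[OF finite_P 3 finite_S0]
      by (intro less.hyps) (auto intro: subst0_Diff_subst0_eq_0)
    then have "subst0 {i} h \<in> transversal_ideal P"
      using transversal_ideal_mono[of P "(\<lambda>S. S - {i}) ` P"] by blast
    moreover have "q \<in> transversal_ideal {S \<in> P. i \<notin> S}"
      using less.prems sum_card_filter_less[OF finite_P 3]
      by (intro less.hyps) (auto intro: subst0_quotient_eq_0[OF i _ _ q])
    then have "var i * q \<in> transversal_ideal P"
      by (rule var_mult_transversal_ideal[OF i])
    ultimately have "subst0 {i} h + var i * q \<in> transversal_ideal P"
      unfolding transversal_ideal_def by (rule ideal_gen_add)
    then show ?thesis
      by (simp only: q[symmetric])
  qed
qed

lemma subst0_monomial_eq_0:
  assumes "G \<subseteq> vars" "G \<inter> S \<noteq> {}"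
  shows "subst0 S (prod var G) = 0"
proof -
  obtain j where j: "j \<in> G" "j \<in> S" using assms(2) by blast
  then have "subst0 S (var j) = 0" using assms(1) by (auto simp: subst0_var)
  moreover have "finite G" using assms(1) finite_vars by (rule finite_subset)
  ultimately show ?thesis
    unfolding subst0.hom_prod using j(1) by (intro prod_zero) auto
qed

lemma transversal_ideal_covers_subset:
  assumes "\<Union>Gs \<subseteq> vars"
  shows "transversal_ideal {S. S \<subseteq> vars \<and> (\<forall>G\<in>Gs. G \<inter> S \<noteq> {})}
    \<subseteq> ideal_gen (prod var ` Gs)"
  unfolding transversal_ideal_def
proof (intro ideal_gen_least subsetI)
  let ?covers = "{S. S \<subseteq> vars \<and> (\<forall>G\<in>Gs. G \<inter> S \<noteq> {})}"
  fix a assume "a \<in> {prod var T |T. T \<subseteq> vars \<and> (\<forall>S\<in>?covers. T \<inter> S \<noteq> {})}"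
  then obtain T where T: "a = prod var T" "T \<subseteq> vars"
    and meets: "\<forall>S\<in>?covers. T \<inter> S \<noteq> {}"
    by auto
  have "\<exists>G\<in>Gs. G \<subseteq> T"
  proof (rule ccontr)
    assume "\<not> (\<exists>G\<in>Gs. G \<subseteq> T)"
    then have "vars - T \<in> ?covers" using assms by blast
    with meets show False by auto
  qed
  then obtain G where G: "G \<in> Gs" "G \<subseteq> T" by blast
  have "finite T" using T(2) finite_vars by (rule finite_subset)
  then have "a = prod var (T - G) * prod var G"
    using T(1) G(2) by (simp add: prod.subset_diff)
  then show "a \<in> ideal_gen (prod var ` Gs)"
    using G(1) by (simp add: ideal_gen_mult ideal_gen_base)
qed

theorem radical_monomial_ideal:
  assumes "\<Union>Gs \<subseteq> vars"
  shows "radical (ideal_gen (prod var ` Gs)) = ideal_gen (prod var ` Gs)"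
proof
  define covers where "covers = {S. S \<subseteq> vars \<and> (\<forall>G\<in>Gs. G \<inter> S \<noteq> {})}"
  show "radical (ideal_gen (prod var ` Gs)) \<subseteq> ideal_gen (prod var ` Gs)"
  proof
    fix h assume "h \<in> radical (ideal_gen (prod var ` Gs))"
    then obtain n where n: "h ^ n \<in> ideal_gen (prod var ` Gs)"
      unfolding radical_def by blast
    have "subst0 S h = 0" if S: "S \<in> covers" for S
    proof -
      have monomials: "subst0 S (prod var G) = 0" if "G \<in> Gs" for G
        using S assms that unfolding covers_def by (intro subst0_monomial_eq_0) auto
      have "subst0 S (h ^ n) = 0"
        by (rule subst0.hom_ideal_gen_eq_0[OF _ n]) (use monomials in auto)
      then show ?thesis by (simp add: subst0.hom_power)
    qed
    moreover have "covers \<subseteq> Pow vars"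
      unfolding covers_def by blast
    ultimately have "h \<in> transversal_ideal covers"
      by (intro vanishing_imp_transversal_ideal)
    then show "h \<in> ideal_gen (prod var ` Gs)"
      using transversal_ideal_covers_subset[OF assms, folded covers_def] by (rule subsetD[rotated])
  qed
qed (rule ideal_gen_subset_radical)

end

lemma zero_substitution_no_vars: "zero_substitution {} var (\<lambda>S. id)"
  by unfold_locales (simp_all add: comm_ring_hom_def)

definition extend_var :: "'i \<Rightarrow> ('i \<Rightarrow> 'a) \<Rightarrow> 'i \<Rightarrow> 'a::comm_ring_1 poly" where
  "extend_var n var i = (if i = n then monom 1 1 else [:var i:])"

(* Only S - {n} is passed to the coefficients, so that subst0 {n} leaves them unchanged. *)
definition extend_subst0 ::
    "'i \<Rightarrow> ('i set \<Rightarrow> 'a \<Rightarrow> 'a) \<Rightarrow> 'i set \<Rightarrow> 'a::comm_ring_1 poly \<Rightarrow> 'a poly" where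
  "extend_subst0 n subst0 S p =
     (if n \<in> S then [:subst0 (S - {n}) (coeff p 0):] else map_poly (subst0 S) p)"

lemma monom_dvd_diff_const_coeff: "monom 1 1 dvd p - [:coeff p 0:]" for p :: "'a::comm_ring_1 poly"
proof -
  have "poly (p - [:coeff p 0:]) 0 = 0" by (simp add: poly_0_coeff_0)
  then show ?thesis
    using dvd_iff_poly_eq_0[of 0 "p - [:coeff p 0:]"] by (simp add: monom_altdef)
qed

lemma const_dvd_diff_map_poly:
  fixes f :: "'a::idom \<Rightarrow> 'a"
  assumes "f 0 = 0" "\<And>c. y dvd c - f c"
  shows "[:y:] dvd p - map_poly f p"
  using assms by (simp add: const_poly_dvd_iff coeff_map_poly)

lemma zero_substitution_extend:
  assumes "zero_substitution vars var subst0" "n \<notin> vars"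
  shows "zero_substitution (insert n vars) (extend_var n var) (extend_subst0 n subst0)"
proof -
  interpret zero_substitution vars var subst0 by (fact assms(1))
  show ?thesis
    unfolding zero_substitution_def
  proof (intro conjI allI impI)
    show "finite (insert n vars)" by (simp add: finite_vars)
    show "comm_ring_hom (extend_subst0 n subst0 S)" for S
      unfolding extend_subst0_def[abs_def]
      using comm_ring_hom_const_coeff[OF comm_ring_hom_subst0]
        comm_ring_hom_map_poly[OF comm_ring_hom_subst0]
      by (cases "n \<in> S") simp_all
    show "extend_subst0 n subst0 {} p = p" for p
      by (simp add: extend_subst0_def subst0_empty[abs_def] map_poly_idI)
    show "extend_subst0 n subst0 S (extend_subst0 n subst0 T p) = extend_subst0 n subst0 (S \<union> T) p"
      for S T p
      by (auto simp: extend_subst0_def coeff_map_poly map_poly_pCons map_poly_map_poly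
          subst0.hom_zero subst0_subst0 o_def Un_Diff)
    show "extend_subst0 n subst0 S (extend_var n var i) = (if i \<in> S then 0 else extend_var n var i)"
      if "i \<in> insert n vars" for S i
      using that assms(2)
      by (auto simp: extend_subst0_def extend_var_def map_poly_monom map_poly_pCons coeff_monom
          subst0.hom_zero subst0.hom_one subst0_var)
    show "extend_var n var i dvd p - extend_subst0 n subst0 {i} p" if "i \<in> insert n vars" for i p
      using that assms(2)
      by (auto simp: extend_var_def extend_subst0_def subst0_empty
          monom_dvd_diff_const_coeff[unfolded One_nat_def]
          intro!: const_dvd_diff_map_poly subst0.hom_zero var_dvd_diff_subst0)
    show "extend_var n var i \<noteq> 0" if "i \<in> insert n vars" for i
      using that assms(2) var_nonzero by (auto simp: extend_var_def)
  qed
qed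

definition mpoly6_var :: "nat \<Rightarrow> 'a::comm_ring_1 mpoly6" where
  "mpoly6_var = extend_var 6 (extend_var 5 (extend_var 4 (extend_var 3 (extend_var 2
     (extend_var 1 (\<lambda>_. 0))))))"

definition mpoly6_subst0 :: "nat set \<Rightarrow> 'a::comm_ring_1 mpoly6 \<Rightarrow> 'a mpoly6" where
  "mpoly6_subst0 = extend_subst0 6 (extend_subst0 5 (extend_subst0 4 (extend_subst0 3
     (extend_subst0 2 (extend_subst0 1 (\<lambda>_. id))))))"

lemma mpoly6_var_eq:
  "mpoly6_var 1 = X1" "mpoly6_var 2 = X2" "mpoly6_var 3 = X3"
  "mpoly6_var 4 = X4" "mpoly6_var 5 = X5" "mpoly6_var 6 = X6"
  by (simp_all add: mpoly6_var_def extend_var_def X1_def X2_def X3_def X4_def X5_def X6_def)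

lemma zero_substitution_mpoly6:
  "zero_substitution {1..6} (mpoly6_var :: nat \<Rightarrow> 'a::idom mpoly6) mpoly6_subst0"
proof -
  have "{1..6} = {6, 5, 4, 3, 2, 1 :: nat}" by auto
  then show ?thesis
    unfolding mpoly6_var_def mpoly6_subst0_def
    by (simp only:) (intro zero_substitution_extend zero_substitution_no_vars; simp)
qed

lemma generators_in_radical:
  fixes x1 x2 x3 x4 x5 x6 :: "'a::comm_ring_1"
  defines "R \<equiv> radical (ideal_gen {x1 * x4, x3 * x6, x1 * x3 + x2 * x4 + x1 * x2 * x5,
              x3 * x5 + x4 * x6 + x1 * x2 * x6 + x1 * x5 * x6 + x2 * x5 * x6})"
  shows "{x1 * x3, x1 * x4, x2 * x4, x3 * x5, x3 * x6, x4 * x6,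
          x1 * x2 * x5, x1 * x2 * x6, x1 * x5 * x6, x2 * x5 * x6} \<subseteq> R"
proof -
  have generators: "x1 * x4 \<in> R" "x3 * x6 \<in> R" "x1 * x3 + x2 * x4 + x1 * x2 * x5 \<in> R"
    "x3 * x5 + x4 * x6 + x1 * x2 * x6 + x1 * x5 * x6 + x2 * x5 * x6 \<in> R"
    unfolding R_def by (intro subsetD[OF ideal_gen_subset_radical] ideal_gen_base; simp)+
  have multiple: "c * a \<in> R" if "a \<in> R" for a c
    using that unfolding R_def by (rule radical_mult)
  have sum: "a + b \<in> R" if "a \<in> R" "b \<in> R" for a b
    using that unfolding R_def by (rule radical_add)
  have summands: "a \<in> R \<and> b \<in> R" if "a + b \<in> R" "a * b \<in> R" for a b
    using that unfolding R_def by (blast intro: radical_summands)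
  have x2x4: "x2 * x4 \<in> R \<and> x1 * x3 + x1 * x2 * x5 \<in> R"
    using generators(3) multiple[OF generators(1), of "x2 * x3 + x2 * x2 * x5"]
    by (intro summands) (simp_all add: algebra_simps)
  have x3x5: "x3 * x5 \<in> R \<and> x4 * x6 + x1 * x2 * x6 + x1 * x5 * x6 + x2 * x5 * x6 \<in> R"
    using generators(4) multiple[OF generators(2), of "x5 * (x4 + x1 * x2 + x1 * x5 + x2 * x5)"]
    by (intro summands) (simp_all add: algebra_simps)
  have x4x6: "x4 * x6 \<in> R \<and> x1 * x2 * x6 + x1 * x5 * x6 + x2 * x5 * x6 \<in> R"
    using x3x5 sum[OF multiple[OF generators(1), of "x2 * x6 * x6 + x5 * x6 * x6"]
        multiple[OF conjunct1[OF x2x4], of "x5 * x6 * x6"]]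
    by (intro summands) (simp_all add: algebra_simps)
  have x1x3: "x1 * x3 \<in> R \<and> x1 * x2 * x5 \<in> R"
    using x2x4 multiple[OF conjunct1[OF x3x5], of "x1 * x1 * x2"]
    by (intro summands) (simp_all add: algebra_simps)
  have x1x2x6: "x1 * x2 * x6 \<in> R \<and> x1 * x5 * x6 + x2 * x5 * x6 \<in> R"
    using x4x6 multiple[OF conjunct2[OF x1x3], of "x1 * x6 * x6 + x2 * x6 * x6"]
    by (intro summands) (simp_all add: algebra_simps)
  have x1x5x6: "x1 * x5 * x6 \<in> R \<and> x2 * x5 * x6 \<in> R"
    using x1x2x6 multiple[OF conjunct2[OF x1x3], of "x5 * x6 * x6"]
    by (intro summands) (simp_all add: algebra_simps)
  show ?thesis
    using generators x2x4 x3x5 x4x6 x1x3 x1x2x6 x1x5x6 by blast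
qed

theorem mainTheorem12:
  shows "ideal_gen {X1 * X3, X1 * X4, X2 * X4, X3 * X5, X3 * X6, X4 * X6,
                    X1 * X2 * X5, X1 * X2 * X6, X1 * X5 * X6, X2 * X5 * X6}
       = radical (ideal_gen {X1 * X4, X3 * X6, X1 * X3 + X2 * X4 + X1 * X2 * X5,
              X3 * X5 + X4 * X6 + X1 * X2 * X6 + X1 * X5 * X6 + X2 * X5 * X6}
              :: 'a::alg_closed_field mpoly6 set)"
    (is "ideal_gen ?I = radical (ideal_gen ?J)")
proof -
  interpret zero_substitution "{1..6}" "mpoly6_var :: nat \<Rightarrow> 'a mpoly6" mpoly6_subst0
    by (rule zero_substitution_mpoly6)
  have "?I = prod mpoly6_var ` {{1, 3}, {1, 4}, {2, 4}, {3, 5}, {3, 6}, {4, 6},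
                                {1, 2, 5}, {1, 2, 6}, {1, 5, 6}, {2, 5, 6}}"
    by (simp add: mpoly6_var_eq mpoly6_var_eq(1)[simplified] mult.assoc)
  then have I_radical: "radical (ideal_gen ?I) = ideal_gen ?I"
    by (simp only:) (rule radical_monomial_ideal, auto)
  have "ideal_gen ?J \<subseteq> ideal_gen ?I"
    by (intro ideal_gen_least) (simp add: ideal_gen_add ideal_gen_base)
  then have "radical (ideal_gen ?J) \<subseteq> ideal_gen ?I"
    using radical_mono I_radical by blast
  moreover have "ideal_gen ?I \<subseteq> radical (ideal_gen ?J)"
    by (intro ideal_gen_subset_radicalI generators_in_radical)
  ultimately show ?thesis by blast
qed

end
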